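(* Let $T$ be a tournament with an even number of arcs. Then $T$ has a $\overrightarrow{P_3}$-decomposition if and only if $$a(X,Y)\le a(Y,X)+a(X)+a(Y)+a(Z,X)+a(Y,Z)$$ for every partition $V(T)=X\cup Y\cup Z$ into three pairwise disjoint (possibly empty) sets.
   Context: A tournament is an orientation of a complete graph. A $\overrightarrow{P_3}$-decomposition of a digraph $D$ is a partition of $A(D)$ into directed paths of length $2$ (pairs of arcs $(u,v),(v,w)$). For $X,Y\subseteq V(T)$, $a(X,Y)$ is the number of arcs with tail in $X$ and head in $Y$, and $a(X)=a(X,X)$. *)

theory Defs
  imports Main
begin

text \<open>A digraph is given by a vertex set V and an arc set A (pairs (tail, head)).\<close>

definition tournament :: "'a set \<Rightarrow> ('a \<times> 'a) set \<Rightarrow> bool" where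
  "tournament V A \<longleftrightarrow> finite V \<and> A \<subseteq> V \<times> V \<and> (\<forall>v. (v, v) \<notin> A) \<and>
     (\<forall>u\<in>V. \<forall>v\<in>V. u \<noteq> v \<longrightarrow> ((u, v) \<in> A \<longleftrightarrow> (v, u) \<notin> A))"

definition path_arcs :: "'a \<times> 'a \<times> 'a \<Rightarrow> ('a \<times> 'a) set" where
  "path_arcs p = (case p of (u, v, w) \<Rightarrow> {(u, v), (v, w)})"

definition P3_decomposition :: "('a \<times> 'a) set \<Rightarrow> ('a \<times> 'a \<times> 'a) set \<Rightarrow> bool" where
  "P3_decomposition A P \<longleftrightarrow>
     (\<forall>(u, v, w)\<in>P. (u, v) \<in> A \<and> (v, w) \<in> A \<and> (u, v) \<noteq> (v, w)) \<and>
     (\<forall>e\<in>A. \<exists>!p. p \<in> P \<and> e \<in> path_arcs p)"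

definition has_P3_decomposition :: "('a \<times> 'a) set \<Rightarrow> bool" where
  "has_P3_decomposition A \<longleftrightarrow> (\<exists>P. P3_decomposition A P)"

definition arcs_between :: "('a \<times> 'a) set \<Rightarrow> 'a set \<Rightarrow> 'a set \<Rightarrow> nat" where
  "arcs_between A X Y = card {(x, y) \<in> A. x \<in> X \<and> y \<in> Y}"

end

theory Submission
  imports Defs
begin

text \<open>
  Choosing the first arc of every path of a P3-decomposition gives a set F \<subseteq> A such that at
  every vertex the arcs of F entering it are as many as the arcs of A - F leaving it; conversely,
  pairing these at every vertex turns such an F back into a decomposition. In a tournament the
  simple graphs on V are exactly the graphs F \<union> F\<inverse> with F \<subseteq> A, and the balance of F says
  that every vertex has the same degree in F \<union> F\<inverse> as its out-degree in T. So T has a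
  decomposition iff its out-degree sequence is graphic; its sum, the number of arcs, is even, so
  by the Erdos-Gallai theorem (in a partition form, proved here by edge switches) this is the
  stated inequality once the degree sums over X and Y are expressed through a(-,-).
\<close>

section \<open>Simple graphs and edge switches\<close>

definition simple_graph :: "'a set \<Rightarrow> ('a \<times> 'a) set \<Rightarrow> bool" where
  "simple_graph V H \<longleftrightarrow> H \<subseteq> V \<times> V \<and> sym H \<and> irrefl H"

definition out_degree :: "('a \<times> 'a) set \<Rightarrow> 'a \<Rightarrow> nat" where
  "out_degree R v = card (R `` {v})"

definition add_edge :: "('a \<times> 'a) set \<Rightarrow> 'a \<Rightarrow> 'a \<Rightarrow> ('a \<times> 'a) set" where
  "add_edge H a b = H \<union> {(a, b), (b, a)}"

definition del_edge :: "('a \<times> 'a) set \<Rightarrow> 'a \<Rightarrow> 'a \<Rightarrow> ('a \<times> 'a) set" where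
  "del_edge H a b = H - {(a, b), (b, a)}"

lemma mem_add_edge [simp]:
  "(x, y) \<in> add_edge H a b \<longleftrightarrow> (x, y) \<in> H \<or> (x = a \<and> y = b) \<or> (x = b \<and> y = a)"
  by (auto simp: add_edge_def)

lemma mem_del_edge [simp]:
  "(x, y) \<in> del_edge H a b \<longleftrightarrow> (x, y) \<in> H \<and> \<not> (x = a \<and> y = b) \<and> \<not> (x = b \<and> y = a)"
  by (auto simp: del_edge_def)

lemma simple_graphD:
  assumes "simple_graph V H" "(a, b) \<in> H"
  shows "(b, a) \<in> H" "a \<noteq> b" "a \<in> V" "b \<in> V"
  using assms by (auto simp: simple_graph_def dest: symD irreflD)

lemma simple_graph_add_edge:
  "simple_graph V H \<Longrightarrow> a \<in> V \<Longrightarrow> b \<in> V \<Longrightarrow> a \<noteq> b \<Longrightarrow> simple_graph V (add_edge H a b)"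
  by (auto simp: simple_graph_def sym_on_def irrefl_on_def)

lemma simple_graph_del_edge: "simple_graph V H \<Longrightarrow> simple_graph V (del_edge H a b)"
  by (auto simp: simple_graph_def sym_on_def irrefl_on_def)

lemma finite_simple_graph: "finite V \<Longrightarrow> simple_graph V H \<Longrightarrow> finite H"
  unfolding simple_graph_def using finite_subset by blast

lemma out_degree_add_edge:
  assumes "finite V" "simple_graph V H" "a \<in> V" "b \<in> V" "a \<noteq> b" "(a, b) \<notin> H"
  shows "out_degree (add_edge H a b) =
    (out_degree H)(a := out_degree H a + 1, b := out_degree H b + 1)"
proof
  fix v
  have "finite (H `` {v})" using finite_simple_graph[OF assms(1,2)] by simp
  moreover have "(b, a) \<notin> H" using simple_graphD(1)[OF assms(2), of b a] assms(6) by blast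
  moreover have "add_edge H a b `` {v} =
      (if v = a then insert b (H `` {v}) else if v = b then insert a (H `` {v}) else H `` {v})"
    by (auto simp: add_edge_def)
  ultimately show "out_degree (add_edge H a b) v =
      ((out_degree H)(a := out_degree H a + 1, b := out_degree H b + 1)) v"
    using assms(5,6) by (auto simp: out_degree_def)
qed

lemma out_degree_del_edge:
  assumes "finite V" "simple_graph V H" "(a, b) \<in> H"
  shows "out_degree (del_edge H a b) =
    (out_degree H)(a := out_degree H a - 1, b := out_degree H b - 1)"
proof
  fix v
  have "finite (H `` {v})" using finite_simple_graph[OF assms(1,2)] by simp
  moreover have "(b, a) \<in> H" "a \<noteq> b" using simple_graphD[OF assms(2,3)] by blast+
  moreover have "del_edge H a b `` {v} =
      (if v = a then H `` {v} - {b} else if v = b then H `` {v} - {a} else H `` {v})"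
    by auto
  ultimately show "out_degree (del_edge H a b) v =
      ((out_degree H)(a := out_degree H a - 1, b := out_degree H b - 1)) v"
    using assms(3) by (auto simp: out_degree_def)
qed

lemma exists_private_neighbour:
  assumes "finite V" "simple_graph V H" "out_degree H r < out_degree H i"
  obtains u where "(i, u) \<in> H" "u \<noteq> r" "(r, u) \<notin> H"
proof -
  have fin: "finite (H `` {r})" "finite (H `` {i})" using finite_simple_graph[OF assms(1,2)]
    by simp_all
  have "\<not> H `` {i} - {r} \<subseteq> H `` {r} - {i}"
  proof
    assume sub: "H `` {i} - {r} \<subseteq> H `` {r} - {i}"
    have le: "card (H `` {i} - {r}) \<le> card (H `` {r} - {i})" using card_mono[OF _ sub] fin by simp
    have "r \<in> H `` {i} \<longleftrightarrow> i \<in> H `` {r}" using simple_graphD(1)[OF assms(2)] by blast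
    then have "card (H `` {i}) \<le> card (H `` {r})"
      using le fin card_gt_0_iff[of "H `` {r}"]
      by (cases "r \<in> H `` {i}") (auto simp: card_Diff_singleton)
    then show False using assms(3) by (simp add: out_degree_def)
  qed
  then show ?thesis using that simple_graphD(2)[OF assms(2)] by blast
qed

lemma out_degree_pos: "finite V \<Longrightarrow> simple_graph V H \<Longrightarrow> (a, b) \<in> H \<Longrightarrow> 0 < out_degree H a"
  unfolding out_degree_def
  by (metis Image_singleton_iff card_gt_0_iff emptyE finite_Image finite_simple_graph)

lemma exists_switch_raise_by_two:
  assumes "finite V" "simple_graph V G" "r \<in> V" "i \<in> V" "(r, i) \<notin> G"
    and "out_degree G r < out_degree G i"
  shows "\<exists>G'. simple_graph V G' \<and> out_degree G' = (out_degree G)(r := out_degree G r + 2)"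
proof -
  obtain u where iu: "(i, u) \<in> G" and "u \<noteq> r" "(r, u) \<notin> G"
    using exists_private_neighbour[OF assms(1,2,6)] .
  have "r \<noteq> i" "i \<noteq> u" "u \<in> V" using iu \<open>(r, u) \<notin> G\<close> simple_graphD[OF assms(2) iu] by auto
  define G1 where "G1 = del_edge G i u"
  define G2 where "G2 = add_edge G1 r i"
  have g1: "simple_graph V G1"
    "out_degree G1 = (out_degree G)(i := out_degree G i - 1, u := out_degree G u - 1)"
    unfolding G1_def using assms(1,2) iu
    by (simp_all add: simple_graph_del_edge out_degree_del_edge)
  have g2: "simple_graph V G2"
    "out_degree G2 = (out_degree G1)(r := out_degree G1 r + 1, i := out_degree G1 i + 1)"
    unfolding G2_def using assms g1 \<open>r \<noteq> i\<close>
    by (simp_all add: G1_def simple_graph_add_edge out_degree_add_edge)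
  have g3: "simple_graph V (add_edge G2 r u)"
    "out_degree (add_edge G2 r u) =
      (out_degree G2)(r := out_degree G2 r + 1, u := out_degree G2 u + 1)"
    using assms g2 \<open>u \<noteq> r\<close> \<open>(r, u) \<notin> G\<close> \<open>u \<in> V\<close> \<open>i \<noteq> u\<close>
    by (simp_all add: G2_def G1_def simple_graph_add_edge out_degree_add_edge)
  have "0 < out_degree G i" "0 < out_degree G u"
    using out_degree_pos[OF assms(1,2)] iu simple_graphD(1)[OF assms(2) iu] by blast+
  then have "out_degree (add_edge G2 r u) = (out_degree G)(r := out_degree G r + 2)"
    using g1(2) g2(2) g3(2) \<open>r \<noteq> i\<close> \<open>u \<noteq> r\<close> \<open>i \<noteq> u\<close> by (auto simp: fun_eq_iff)
  then show ?thesis using g3(1) by blast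
qed

lemma exists_switch_raise_pair:
  assumes "finite V" "simple_graph V G" "r \<in> V" "k \<in> V" "x \<in> V" "k \<noteq> r" "k \<noteq> x" "(k, x) \<notin> G"
    and "x = r \<or> out_degree G r < out_degree G x"
  shows "\<exists>G'. simple_graph V G' \<and>
    out_degree G' = (out_degree G)(r := out_degree G r + 1, k := out_degree G k + 1)"
  using assms(9)
proof
  assume "x = r"
  then have "(r, k) \<notin> G" using assms(8) simple_graphD(1)[OF assms(2), of r k] by blast
  then show ?thesis
    using assms(1-4,6) by (metis simple_graph_add_edge out_degree_add_edge)
next
  assume "out_degree G r < out_degree G x"
  then obtain u where xu: "(x, u) \<in> G" and "u \<noteq> r" "(r, u) \<notin> G"
    using exists_private_neighbour[OF assms(1,2)] by blast
  have "r \<noteq> x" "x \<noteq> u" "u \<noteq> k" "u \<in> V" "(x, k) \<notin> G"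
    using xu assms(8) \<open>(r, u) \<notin> G\<close> simple_graphD[OF assms(2) xu]
      simple_graphD(1)[OF assms(2), of x k]
    by auto
  define G1 where "G1 = del_edge G x u"
  define G2 where "G2 = add_edge G1 x k"
  have g1: "simple_graph V G1"
    "out_degree G1 = (out_degree G)(x := out_degree G x - 1, u := out_degree G u - 1)"
    unfolding G1_def using assms(1,2) xu
    by (simp_all add: simple_graph_del_edge out_degree_del_edge)
  have g2: "simple_graph V G2"
    "out_degree G2 = (out_degree G1)(x := out_degree G1 x + 1, k := out_degree G1 k + 1)"
    unfolding G2_def using assms g1 \<open>(x, k) \<notin> G\<close>
    by (simp_all add: G1_def simple_graph_add_edge out_degree_add_edge)
  have g3: "simple_graph V (add_edge G2 r u)"
    "out_degree (add_edge G2 r u) =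
      (out_degree G2)(r := out_degree G2 r + 1, u := out_degree G2 u + 1)"
    using assms g2 \<open>u \<noteq> r\<close> \<open>(r, u) \<notin> G\<close> \<open>u \<in> V\<close> \<open>r \<noteq> x\<close>
    by (simp_all add: G2_def G1_def simple_graph_add_edge out_degree_add_edge)
  have "0 < out_degree G x" "0 < out_degree G u"
    using out_degree_pos[OF assms(1,2)] xu simple_graphD(1)[OF assms(2) xu] by blast+
  then have "out_degree (add_edge G2 r u) =
      (out_degree G)(r := out_degree G r + 1, k := out_degree G k + 1)"
    using g1(2) g2(2) g3(2) assms(6,7) \<open>r \<noteq> x\<close> \<open>u \<noteq> r\<close> \<open>x \<noteq> u\<close> \<open>u \<noteq> k\<close>
    by (auto simp: fun_eq_iff)
  then show ?thesis using g3(1) by blast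
qed

lemma sum_out_degree:
  assumes "finite R" "finite S"
  shows "sum (out_degree R) S = card (R \<inter> S \<times> UNIV)"
proof -
  have "R \<inter> S \<times> UNIV = Sigma S (\<lambda>x. R `` {x})" by auto
  then show ?thesis using assms by (simp add: out_degree_def)
qed

lemma sum_out_degree_partition:
  assumes "finite R" "R \<subseteq> V \<times> V" "finite S"
    and "X \<union> Y \<union> Z = V" "X \<inter> Y = {}" "X \<inter> Z = {}" "Y \<inter> Z = {}"
  shows "sum (out_degree R) S = card (R \<inter> S \<times> X) + card (R \<inter> S \<times> Y) + card (R \<inter> S \<times> Z)"
proof -
  have "R \<inter> S \<times> UNIV = (R \<inter> S \<times> X) \<union> (R \<inter> S \<times> Y) \<union> (R \<inter> S \<times> Z)"
    using assms(2,4) by blast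
  moreover have "(R \<inter> S \<times> X) \<inter> (R \<inter> S \<times> Y) = {}" "((R \<inter> S \<times> X) \<union> (R \<inter> S \<times> Y)) \<inter> (R \<inter> S \<times> Z) = {}"
    using assms(5-7) by blast+
  ultimately show ?thesis
    using assms(1,3) by (simp add: sum_out_degree card_Un_disjoint)
qed

lemma card_sym_swap: "sym H \<Longrightarrow> card (H \<inter> X \<times> Y) = card (H \<inter> Y \<times> X)"
proof -
  assume "sym H"
  then have "prod.swap ` (H \<inter> X \<times> Y) = H \<inter> Y \<times> X" by (auto dest: symD)
  then show ?thesis using card_image[of prod.swap "H \<inter> X \<times> Y"] by simp
qed

lemma card_offdiag:
  assumes "finite X"
  shows "card (X \<times> X - Id) = card X * (card X - 1)"
proof -
  have "card (X \<times> X - Id) = card (X \<times> X - (\<lambda>x. (x, x)) ` X)" by (rule arg_cong[where f = card]) auto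
  also have "\<dots> = card (X \<times> X) - card ((\<lambda>x. (x, x)) ` X)"
    using assms by (intro card_Diff_subset) auto
  also have "\<dots> = card X * card X - card X"
    by (simp add: card_image inj_on_def card_cartesian_product)
  finally show ?thesis by (simp add: diff_mult_distrib2)
qed

lemma even_card_sym_irrefl:
  assumes "finite H" "sym H" "irrefl H"
  shows "even (card H)"
proof -
  define orbit where "orbit e = {e, prod.swap e}" for e :: "'a \<times> 'a"
  have "\<Union> (orbit ` H) = H" using assms(2) by (auto simp: orbit_def dest: symD)
  moreover have "card (orbit e) = 2" if "e \<in> H" for e
  proof -
    obtain a b where "e = (a, b)" by fastforce
    moreover have "a \<noteq> b" using that assms(3) calculation by (auto dest: irreflD)
    ultimately show ?thesis by (simp add: orbit_def)
  qed
  moreover have "c1 \<inter> c2 = {}" if "c1 \<in> orbit ` H" "c2 \<in> orbit ` H" "c1 \<noteq> c2" for c1 c2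
    using that by (auto simp: orbit_def)
  ultimately have "2 * card (orbit ` H) = card H"
    using card_partition[of "orbit ` H" 2] assms(1) by (metis finite_imageI imageE)
  then show ?thesis by (metis dvd_triv_left)
qed

lemma sum_out_degree_simple_graph:
  assumes "finite V" "simple_graph V H"
  shows "sum (out_degree H) V = card H"
proof -
  have "H \<inter> V \<times> UNIV = H" using assms(2) by (auto simp: simple_graph_def)
  then show ?thesis using assms by (simp add: sum_out_degree finite_simple_graph)
qed

lemma even_sum_out_degree:
  "finite V \<Longrightarrow> simple_graph V H \<Longrightarrow> even (sum (out_degree H) V)"
  by (simp add: sum_out_degree_simple_graph even_card_sym_irrefl finite_simple_graph
      simple_graph_def)

section \<open>The Erdos-Gallai condition\<close>

text \<open>Partition form of the Erdos-Gallai inequalities: X takes the place of the k vertices of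
  largest degree, Z of the remaining vertices whose term is min(f v, k) = k, and Y of the rest.\<close>
definition erdos_gallai_condition :: "'a set \<Rightarrow> ('a \<Rightarrow> nat) \<Rightarrow> bool" where
  "erdos_gallai_condition V f \<longleftrightarrow>
    (\<forall>X Y Z. X \<union> Y \<union> Z = V \<and> X \<inter> Y = {} \<and> X \<inter> Z = {} \<and> Y \<inter> Z = {} \<longrightarrow>
       sum f X \<le> card X * (card X - 1) + card X * card Z + sum f Y)"

lemma erdos_gallai_condition_cong:
  assumes "\<And>v. v \<in> V \<Longrightarrow> f v = g v"
  shows "erdos_gallai_condition V f \<longleftrightarrow> erdos_gallai_condition V g"
proof -
  have "sum f X = sum g X" if "X \<subseteq> V" for X
    using that assms by (intro sum.cong) auto
  then show ?thesis
    unfolding erdos_gallai_condition_def by (metis le_sup_iff order_refl)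
qed

lemma sum_out_degree_simple_graph_partition:
  assumes "finite V" "simple_graph V H"
    and "X \<union> Y \<union> Z = V" "X \<inter> Y = {}" "X \<inter> Z = {}" "Y \<inter> Z = {}"
  shows "sum (out_degree H) X = card (H \<inter> X \<times> X) + card (H \<inter> Y \<times> X) + card (H \<inter> X \<times> Z)"
proof -
  have "finite X" using assms(1,3) by (metis finite_Un)
  then have "sum (out_degree H) X = card (H \<inter> X \<times> X) + card (H \<inter> X \<times> Y) + card (H \<inter> X \<times> Z)"
    using assms(3-6) finite_simple_graph[OF assms(1,2)] assms(2)
    by (intro sum_out_degree_partition) (auto simp: simple_graph_def)
  then show ?thesis using assms(2) card_sym_swap[of H X Y] by (simp add: simple_graph_def)
qed

lemma erdos_gallai_condition_out_degree:
  assumes "finite V" "simple_graph V H"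
  shows "erdos_gallai_condition V (out_degree H)"
  unfolding erdos_gallai_condition_def
proof (intro allI impI, elim conjE)
  fix X Y Z assume part: "X \<union> Y \<union> Z = V" "X \<inter> Y = {}" "X \<inter> Z = {}" "Y \<inter> Z = {}"
  have fin: "finite X" "finite Y" "finite Z" using assms(1) part(1) by (metis finite_Un)+
  have "card (H \<inter> X \<times> X) \<le> card (X \<times> X - Id)"
    using assms(2) fin by (intro card_mono) (auto simp: simple_graph_def dest: irreflD)
  moreover have "card (H \<inter> Y \<times> X) \<le> sum (out_degree H) Y"
    using fin finite_simple_graph[OF assms] by (auto simp: sum_out_degree intro: card_mono)
  moreover have "card (H \<inter> X \<times> Z) \<le> card (X \<times> Z)"
    using fin by (intro card_mono) auto
  ultimately show
    "sum (out_degree H) X \<le> card X * (card X - 1) + card X * card Z + sum (out_degree H) Y"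
    using sum_out_degree_simple_graph_partition[OF assms part] fin
    by (simp add: card_offdiag card_cartesian_product)
qed

text \<open>The equality case of the counting above; this is the configuration in which the
  augmentation step below finds no switch.\<close>
lemma not_erdos_gallai_condition_if_tight:
  assumes "finite V" "simple_graph V H" "X \<subseteq> V" "X \<times> X - Id \<subseteq> H"
    and "sum (out_degree H) X < sum f X"
    and "\<forall>k\<in>V - X. X \<subseteq> H `` {k} \<or> (out_degree H k = f k \<and> H `` {k} \<subseteq> X)"
  shows "\<not> erdos_gallai_condition V f"
proof
  assume eg: "erdos_gallai_condition V f"
  define Z where "Z = {k \<in> V - X. X \<subseteq> H `` {k}}"
  define Y where "Y = V - X - Z"
  have part: "X \<union> Y \<union> Z = V" "X \<inter> Y = {}" "X \<inter> Z = {}" "Y \<inter> Z = {}"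
    using assms(3) by (auto simp: Y_def Z_def)
  have fin: "finite X" "finite Y" "finite Z" using assms(1) part(1) by (metis finite_Un)+
  have "H \<inter> X \<times> X = X \<times> X - Id"
    using assms(2,4) by (auto simp: simple_graph_def dest: irreflD)
  moreover have "H \<inter> X \<times> Z = X \<times> Z"
    using assms(2) by (auto simp: Z_def dest: simple_graphD(1))
  moreover have "card (H \<inter> Y \<times> X) = sum f Y"
  proof -
    have "H \<inter> Y \<times> X = H \<inter> Y \<times> UNIV" "\<forall>y\<in>Y. out_degree H y = f y"
      using assms(6) by (auto simp: Y_def Z_def)
    then show ?thesis
      using fin(2) finite_simple_graph[OF assms(1,2)] by (simp add: sum_out_degree[symmetric])
  qed
  ultimately have "sum (out_degree H) X = card X * (card X - 1) + card X * card Z + sum f Y"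
    using sum_out_degree_simple_graph_partition[OF assms(1,2) part] fin
      finite_simple_graph[OF assms(1,2)]
    by (simp add: card_offdiag card_cartesian_product sum_out_degree)
  then show False
    using eg part assms(5) unfolding erdos_gallai_condition_def by (metis not_le)
qed

section \<open>Realizing a degree sequence\<close>

definition partial_realization :: "'a set \<Rightarrow> ('a \<Rightarrow> nat) \<Rightarrow> 'a set \<Rightarrow> ('a \<times> 'a) set \<Rightarrow> bool" where
  "partial_realization V f P H \<longleftrightarrow>
    simple_graph V H \<and> (\<forall>v\<in>V. out_degree H v \<le> f v) \<and> (\<forall>v\<in>P. out_degree H v = f v)"

text \<open>Vertices are saturated one at a time, in decreasing order of f. While the current vertex r
  is deficient, an edge switch raises its degree without exceeding f or unsaturating P; when no
  switch applies, the Erdos-Gallai condition fails for the partition built from insert r P.\<close>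
context
  fixes V :: "'a set" and f :: "'a \<Rightarrow> nat"
  assumes finite_V: "finite V"
    and erdos_gallai: "erdos_gallai_condition V f"
    and even_sum: "even (sum f V)"
begin

lemma exists_other_deficient:
  assumes "partial_realization V f P H" "r \<in> V" "f r = out_degree H r + 1"
  shows "\<exists>k\<in>V. k \<noteq> r \<and> out_degree H k < f k"
proof (rule ccontr)
  assume "\<not> ?thesis"
  then have "f v = out_degree H v + (if v = r then 1 else 0)" if "v \<in> V" for v
    using assms that by (force simp: partial_realization_def)
  then have "sum f V = sum (out_degree H) V + 1"
    using finite_V assms(2) by (simp add: sum.distrib)
  then show False
    using even_sum even_sum_out_degree[OF finite_V] assms(1) by (simp add: partial_realization_def)
qed

context
  fixes P :: "'a set" and r :: 'a and H :: "('a \<times> 'a) set"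
  assumes partial: "partial_realization V f P H"
    and P_subset: "P \<subseteq> V" and r_in: "r \<in> V" and r_notin: "r \<notin> P"
    and r_deficient: "out_degree H r < f r"
    and r_min: "\<forall>i\<in>P. f r \<le> f i"
begin

private lemma graph: "simple_graph V H"
  using partial by (simp add: partial_realization_def)

private lemma out_degree_le: "v \<in> V \<Longrightarrow> out_degree H v \<le> f v"
  using partial by (simp add: partial_realization_def)

private lemma saturated: "i \<in> P \<Longrightarrow> out_degree H i = f i"
  using partial by (simp add: partial_realization_def)

private lemma out_degree_r_less: "i \<in> P \<Longrightarrow> out_degree H r < out_degree H i"
  using r_deficient r_min saturated by fastforce

private lemma improve_by_graph:
  assumes "simple_graph V H'" "x \<notin> P"
    and "out_degree H r < out_degree H' r" "out_degree H' r \<le> f r" "out_degree H' x \<le> f x"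
    and "\<And>v. v \<noteq> r \<Longrightarrow> v \<noteq> x \<Longrightarrow> out_degree H' v = out_degree H v"
  shows "\<exists>H'. partial_realization V f P H' \<and> out_degree H r < out_degree H' r"
proof -
  have "partial_realization V f P H'"
    unfolding partial_realization_def
    using assms out_degree_le saturated r_notin by metis
  then show ?thesis using assms(3) by blast
qed

lemma improve_if_r_misses_P:
  assumes "i \<in> P" "(r, i) \<notin> H"
  shows "\<exists>H'. partial_realization V f P H' \<and> out_degree H r < out_degree H' r"
proof -
  have i: "i \<in> V" "i \<noteq> r" using assms(1) P_subset r_notin by auto
  consider "out_degree H r + 2 \<le> f r" | "f r = out_degree H r + 1"
    using r_deficient by linarith
  then show ?thesis
  proof cases
    case 1
    obtain H' where "simple_graph V H'" "out_degree H' = (out_degree H)(r := out_degree H r + 2)"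
      using exists_switch_raise_by_two[OF finite_V graph r_in i(1) assms(2)]
        out_degree_r_less[OF assms(1)] by blast
    then show ?thesis using 1 r_notin by (intro improve_by_graph[of H' r]) auto
  next
    case 2
    obtain k where k: "k \<in> V" "k \<noteq> r" "out_degree H k < f k"
      using exists_other_deficient[OF partial r_in 2] by blast
    then have "k \<notin> P" using saturated by fastforce
    show ?thesis
    proof (cases "(r, k) \<in> H")
      case False
      then have "(k, r) \<notin> H" using simple_graphD(1)[OF graph, of k r] by blast
      then obtain H' where "simple_graph V H'"
        "out_degree H' = (out_degree H)(r := out_degree H r + 1, k := out_degree H k + 1)"
        using exists_switch_raise_pair[OF finite_V graph r_in k(1) r_in k(2) k(2)] by blast
      then show ?thesis using 2 k \<open>k \<notin> P\<close> by (intro improve_by_graph[of H' k]) auto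
    next
      case True
      define G where "G = del_edge H r k"
      have G: "simple_graph V G"
        "out_degree G = (out_degree H)(r := out_degree H r - 1, k := out_degree H k - 1)"
        unfolding G_def using finite_V graph True
        by (simp_all add: simple_graph_del_edge out_degree_del_edge)
      have "i \<noteq> k" using assms(1) \<open>k \<notin> P\<close> by blast
      then have "out_degree G r < out_degree G i"
        using G(2) i k(2) out_degree_r_less[OF assms(1)] by simp
      then obtain H' where "simple_graph V H'"
        "out_degree H' = (out_degree G)(r := out_degree G r + 2)"
        using exists_switch_raise_by_two[OF finite_V G(1) r_in i(1)] assms(2) by (auto simp: G_def)
      moreover have "0 < out_degree H r" using out_degree_pos[OF finite_V graph True] .
      ultimately show ?thesis
        using 2 k \<open>k \<notin> P\<close> G(2) by (intro improve_by_graph[of H' k]) auto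
    qed
  qed
qed

lemma improve_if_P_not_clique:
  assumes r_adj: "\<forall>i\<in>P. (r, i) \<in> H" and "a \<in> P" "b \<in> P" "a \<noteq> b" "(a, b) \<notin> H"
  shows "\<exists>H'. partial_realization V f P H' \<and> out_degree H r < out_degree H' r"
proof -
  have fin_P: "finite P" using P_subset finite_V finite_subset by blast
  have "\<not> H `` {b} \<subseteq> insert r P"
  proof
    assume "H `` {b} \<subseteq> insert r P"
    then have "H `` {b} \<subseteq> insert r (P - {a, b})"
      using assms(5) simple_graphD(1,2)[OF graph] by blast
    then have "out_degree H b \<le> card (insert r (P - {a, b}))"
      unfolding out_degree_def using fin_P by (intro card_mono) auto
    also have "\<dots> = card P - 1"
      using assms(2-4) fin_P r_notin card_mono[OF fin_P, of "{a, b}"]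
      by (simp add: card_Diff_subset)
    also have "card P \<le> out_degree H r"
      unfolding out_degree_def using r_adj finite_simple_graph[OF finite_V graph]
      by (intro card_mono) auto
    finally show False using out_degree_r_less[OF assms(3)] by linarith
  qed
  then obtain w where bw: "(b, w) \<in> H" and w: "w \<notin> insert r P" by blast
  have "w \<in> V" using simple_graphD(4)[OF graph bw] .
  define G where "G = del_edge H b w"
  have G: "simple_graph V G"
    "out_degree G = (out_degree H)(b := out_degree H b - 1, w := out_degree H w - 1)"
    unfolding G_def using finite_V graph bw
    by (simp_all add: simple_graph_del_edge out_degree_del_edge)
  have "a \<noteq> w" "b \<noteq> r" "r \<noteq> w" "a \<in> V" "b \<in> V"
    using w assms(2,3) r_notin P_subset by auto
  have "(b, a) \<notin> G" using assms(5) simple_graphD(1)[OF graph, of b a] by (auto simp: G_def)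
  moreover have "out_degree G r < out_degree G a"
    using G(2) \<open>a \<noteq> w\<close> \<open>b \<noteq> r\<close> \<open>r \<noteq> w\<close> assms(4) out_degree_r_less[OF assms(2)] by simp
  ultimately obtain H' where "simple_graph V H'"
    "out_degree H' = (out_degree G)(r := out_degree G r + 1, b := out_degree G b + 1)"
    using exists_switch_raise_pair[OF finite_V G(1) r_in \<open>b \<in> V\<close> \<open>a \<in> V\<close> \<open>b \<noteq> r\<close>] assms(4) by blast
  moreover have "0 < out_degree H b" using out_degree_pos[OF finite_V graph bw] .
  moreover have "out_degree H w \<le> f w" using out_degree_le \<open>w \<in> V\<close> .
  ultimately show ?thesis
    using w G(2) r_deficient \<open>b \<noteq> r\<close>
    by (intro improve_by_graph[of H' w]) auto
qed

lemma improve_if_outside_vertex_misses: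
  assumes k: "k \<in> V - insert r P" and x: "x \<in> insert r P" "(k, x) \<notin> H"
    and k_free: "out_degree H k < f k \<or> (\<exists>w\<in>V - insert r P. (k, w) \<in> H)"
  shows "\<exists>H'. partial_realization V f P H' \<and> out_degree H r < out_degree H' r"
proof -
  have x_ok: "x \<in> V" "x = r \<or> out_degree H r < out_degree H x"
    using x(1) r_in P_subset out_degree_r_less by auto
  from k_free show ?thesis
  proof
    assume "out_degree H k < f k"
    moreover obtain H' where "simple_graph V H'"
      "out_degree H' = (out_degree H)(r := out_degree H r + 1, k := out_degree H k + 1)"
      using exists_switch_raise_pair[OF finite_V graph r_in _ x_ok(1) _ _ x(2) x_ok(2)] k x(1)
      by auto
    ultimately show ?thesis using k r_deficient by (intro improve_by_graph[of H' k]) auto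
  next
    assume "\<exists>w\<in>V - insert r P. (k, w) \<in> H"
    then obtain w where w: "w \<in> V - insert r P" "(k, w) \<in> H" by blast
    define G where "G = del_edge H k w"
    have G: "simple_graph V G"
      "out_degree G = (out_degree H)(k := out_degree H k - 1, w := out_degree H w - 1)"
      unfolding G_def using finite_V graph w(2)
      by (simp_all add: simple_graph_del_edge out_degree_del_edge)
    have "x \<noteq> w" "x \<noteq> k" using x(1) w(1) k by auto
    then have "x = r \<or> out_degree G r < out_degree G x"
      using x_ok(2) G(2) k w(1) by auto
    then obtain H' where "simple_graph V H'"
      "out_degree H' = (out_degree G)(r := out_degree G r + 1, k := out_degree G k + 1)"
      using exists_switch_raise_pair[OF finite_V G(1) r_in _ x_ok(1) _ \<open>x \<noteq> k\<close>[symmetric]] k x(2)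
      by (auto simp: G_def)
    moreover have "0 < out_degree H k" using out_degree_pos[OF finite_V graph w(2)] .
    moreover have "out_degree H w \<le> f w" using out_degree_le w(1) by blast
    ultimately show ?thesis
      using w k G(2) r_deficient
      by (intro improve_by_graph[of H' w]) auto
  qed
qed

lemma not_erdos_gallai_condition_if_not_improvable:
  assumes r_adj: "\<forall>i\<in>P. (r, i) \<in> H" and P_clique: "\<forall>a\<in>P. \<forall>b\<in>P. a \<noteq> b \<longrightarrow> (a, b) \<in> H"
    and outside: "\<And>k x. k \<in> V - insert r P \<Longrightarrow> x \<in> insert r P \<Longrightarrow> (k, x) \<notin> H \<Longrightarrow>
      f k \<le> out_degree H k \<and> (\<forall>w\<in>V - insert r P. (k, w) \<notin> H)"
  shows "\<not> erdos_gallai_condition V f"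
proof (rule not_erdos_gallai_condition_if_tight[OF finite_V graph])
  show "insert r P \<subseteq> V" using r_in P_subset by blast
  show "insert r P \<times> insert r P - Id \<subseteq> H"
    using r_adj P_clique simple_graphD(1)[OF graph] by blast
  have "finite P" using P_subset finite_V finite_subset by blast
  then show "sum (out_degree H) (insert r P) < sum f (insert r P)"
    using saturated r_deficient r_notin by simp
  show "\<forall>k\<in>V - insert r P. insert r P \<subseteq> H `` {k} \<or>
      (out_degree H k = f k \<and> H `` {k} \<subseteq> insert r P)"
  proof
    fix k assume k: "k \<in> V - insert r P"
    show "insert r P \<subseteq> H `` {k} \<or> (out_degree H k = f k \<and> H `` {k} \<subseteq> insert r P)"
    proof (cases "insert r P \<subseteq> H `` {k}")
      case False
      then obtain x where "x \<in> insert r P" "(k, x) \<notin> H" by blast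
      then have "f k \<le> out_degree H k" "\<forall>w\<in>V - insert r P. (k, w) \<notin> H"
        using outside[OF k] by blast+
      moreover have "out_degree H k \<le> f k" using out_degree_le k by blast
      ultimately have "out_degree H k = f k" by simp
      moreover have "H `` {k} \<subseteq> insert r P"
        using \<open>\<forall>w\<in>V - insert r P. (k, w) \<notin> H\<close> simple_graphD(4)[OF graph] by blast
      ultimately show ?thesis by blast
    qed simp
  qed
qed

lemma improve_partial_realization:
  "\<exists>H'. partial_realization V f P H' \<and> out_degree H r < out_degree H' r"
proof (rule ccontr)
  assume none: "\<not> ?thesis"
  have "\<forall>i\<in>P. (r, i) \<in> H" using none improve_if_r_misses_P by blast
  moreover have "\<forall>a\<in>P. \<forall>b\<in>P. a \<noteq> b \<longrightarrow> (a, b) \<in> H"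
    using none improve_if_P_not_clique calculation by blast
  moreover have "f k \<le> out_degree H k \<and> (\<forall>w\<in>V - insert r P. (k, w) \<notin> H)"
    if "k \<in> V - insert r P" "x \<in> insert r P" "(k, x) \<notin> H" for k x
    using none improve_if_outside_vertex_misses[OF that] not_less by blast
  ultimately show False
    using not_erdos_gallai_condition_if_not_improvable erdos_gallai by blast
qed

end

lemma extend_partial_realization:
  assumes "partial_realization V f P H" "P \<subseteq> V" "r \<in> V" "r \<notin> P" "\<forall>i\<in>P. f r \<le> f i"
  shows "\<exists>H'. partial_realization V f (insert r P) H'"
  using assms(1)
proof (induction "f r - out_degree H r" arbitrary: H rule: less_induct)
  case less
  show ?case
  proof (cases "out_degree H r < f r")
    case True
    then obtain H' where H': "partial_realization V f P H'" "out_degree H r < out_degree H' r"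
      using improve_partial_realization[OF less.prems assms(2-4) _ assms(5)] by blast
    then have "f r - out_degree H' r < f r - out_degree H r"
      using assms(3) True by (auto simp: partial_realization_def)
    then show ?thesis using less.hyps H'(1) by blast
  next
    case False
    moreover have "out_degree H r \<le> f r"
      using less.prems assms(3) by (simp add: partial_realization_def)
    ultimately have "out_degree H r = f r" by simp
    then show ?thesis using less.prems by (auto simp: partial_realization_def)
  qed
qed

lemma exists_partial_realization:
  "P \<subseteq> V \<Longrightarrow> \<forall>i\<in>P. \<forall>k\<in>V - P. f k \<le> f i \<Longrightarrow> \<exists>H. partial_realization V f P H"
proof (induction "card P" arbitrary: P)
  case 0
  then have "P = {}" using finite_V finite_subset by fastforce
  moreover have "out_degree ({} :: ('a \<times> 'a) set) v = 0" for v by (simp add: out_degree_def)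
  ultimately have "partial_realization V f P {}"
    by (simp add: partial_realization_def simple_graph_def)
  then show ?case by blast
next
  case (Suc n)
  then obtain r0 where "r0 \<in> P" by fastforce
  then obtain r where r: "r \<in> P" "\<forall>i\<in>P. f r \<le> f i"
    using ex_has_least_nat[of "\<lambda>x. x \<in> P" r0 f] by blast
  have fin_P: "finite P" using Suc.prems(1) finite_V finite_subset by blast
  have "\<forall>i\<in>P - {r}. \<forall>k\<in>V - (P - {r}). f k \<le> f i"
    using Suc.prems(2) r by auto
  moreover have "n = card (P - {r})" using Suc.hyps(2) r(1) fin_P by simp
  ultimately obtain H where "partial_realization V f (P - {r}) H"
    using Suc.hyps(1) Suc.prems(1) by blast
  then have "\<exists>H'. partial_realization V f (insert r (P - {r})) H'"
    using Suc.prems(1) r by (intro extend_partial_realization) auto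
  then show ?case using r(1) by (simp add: insert_absorb)
qed

lemma erdos_gallai_realization: "\<exists>H. simple_graph V H \<and> (\<forall>v\<in>V. out_degree H v = f v)"
  using exists_partial_realization[of V] by (auto simp: partial_realization_def)

end

theorem degree_realization_iff_erdos_gallai:
  assumes "finite V" "even (sum f V)"
  shows "(\<exists>H. simple_graph V H \<and> (\<forall>v\<in>V. out_degree H v = f v)) \<longleftrightarrow> erdos_gallai_condition V f"
  using erdos_gallai_realization[OF assms(1) _ assms(2)]
    erdos_gallai_condition_out_degree[OF assms(1)]
    erdos_gallai_condition_cong by metis

section \<open>Path decompositions and balanced arc sets\<close>

lemma path_arcs_simps [simp]: "path_arcs (u, v, w) = {(u, v), (v, w)}"
  by (simp add: path_arcs_def)

text \<open>F is to be the set of first arcs of the paths.\<close>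
definition P3_balanced :: "('a \<times> 'a) set \<Rightarrow> ('a \<times> 'a) set \<Rightarrow> bool" where
  "P3_balanced A F \<longleftrightarrow> F \<subseteq> A \<and> (\<forall>v. card (F\<inverse> `` {v}) = card ((A - F) `` {v}))"

lemma P3_decomposition_unique:
  assumes "P3_decomposition A P" "p \<in> P" "q \<in> P" "e \<in> path_arcs p" "e \<in> path_arcs q"
  shows "p = q"
proof -
  obtain u v w where "p = (u, v, w)" by (cases p) auto
  then have "e \<in> A" using assms(1,2,4) by (auto simp: P3_decomposition_def)
  then show ?thesis using assms unfolding P3_decomposition_def by blast
qed

lemma P3_decomposition_pathD:
  "P3_decomposition A P \<Longrightarrow> (u, v, w) \<in> P \<Longrightarrow> (u, v) \<in> A \<and> (v, w) \<in> A \<and> (u, v) \<noteq> (v, w)"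
  unfolding P3_decomposition_def by blast

lemma P3_decomposition_second_arcs:
  assumes dec: "P3_decomposition A P"
  shows "A - {(u, v). \<exists>w. (u, v, w) \<in> P} = {(v, w). \<exists>u. (u, v, w) \<in> P}"
proof
  show "A - {(u, v). \<exists>w. (u, v, w) \<in> P} \<subseteq> {(v, w). \<exists>u. (u, v, w) \<in> P}"
  proof (clarify)
    fix a b assume ab: "(a, b) \<in> A" "\<nexists>w. (a, b, w) \<in> P"
    obtain p where "p \<in> P" "(a, b) \<in> path_arcs p"
      using dec ab(1) unfolding P3_decomposition_def by blast
    then show "\<exists>u. (u, a, b) \<in> P" using ab(2) by (cases p) auto
  qed
  show "{(v, w). \<exists>u. (u, v, w) \<in> P} \<subseteq> A - {(u, v). \<exists>w. (u, v, w) \<in> P}"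
  proof (clarify)
    fix u v w assume uvw: "(u, v, w) \<in> P"
    have "(v, w, x) \<notin> P" for x
      using P3_decomposition_unique[OF dec uvw, of "(v, w, x)"
        "(v, w)"] P3_decomposition_pathD[OF dec uvw]
      by auto
    then show "(v, w) \<in> A - {(u, v). \<exists>w. (u, v, w) \<in> P}" using P3_decomposition_pathD[OF dec uvw]
      by auto
  qed
qed

lemma P3_decomposition_imp_balanced:
  assumes dec: "P3_decomposition A P"
  shows "P3_balanced A {(u, v). \<exists>w. (u, v, w) \<in> P}"
proof -
  define F where "F = {(u, v). \<exists>w. (u, v, w) \<in> P}"
  define S where "S = {(v, w). \<exists>u. (u, v, w) \<in> P}"
  note unique = P3_decomposition_unique[OF dec]
  have "card (F\<inverse> `` {v}) = card (S `` {v})" for v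
  proof -
    define C where "C = {(u, w). (u, v, w) \<in> P}"
    have "inj_on fst C"
    proof (rule inj_onI)
      fix p q assume "p \<in> C" "q \<in> C" "fst p = fst q"
      then show "p = q"
        using unique[of "(fst p, v, snd p)" "(fst q, v, snd q)" "(fst p, v)"]
        by (auto simp: C_def prod_eq_iff)
    qed
    moreover have "inj_on snd C"
    proof (rule inj_onI)
      fix p q assume "p \<in> C" "q \<in> C" "snd p = snd q"
      then show "p = q"
        using unique[of "(fst p, v, snd p)" "(fst q, v, snd q)" "(v, snd p)"]
        by (auto simp: C_def prod_eq_iff)
    qed
    moreover have "fst ` C = F\<inverse> `` {v}" "snd ` C = S `` {v}"
      by (force simp: C_def F_def S_def)+
    ultimately show ?thesis by (metis card_image)
  qed
  moreover have "F \<subseteq> A" using P3_decomposition_pathD[OF dec] by (auto simp: F_def)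
  ultimately show ?thesis
    using P3_decomposition_second_arcs[OF dec] by (simp add: P3_balanced_def F_def S_def)
qed

lemma P3_decomposition_of_pairing:
  assumes F: "F \<subseteq> A" and g: "\<And>v. bij_betw (g v) (F\<inverse> `` {v}) ((A - F) `` {v})"
  shows "P3_decomposition A {(u, v, g v u) | u v. (u, v) \<in> F}"
proof -
  define P where "P = {(u, v, g v u) | u v. (u, v) \<in> F}"
  have second: "(v, g v u) \<in> A - F" if "(u, v) \<in> F" for u v
    using bij_betwE[OF g[of v]] that by blast
  have "\<exists>!p. p \<in> P \<and> e \<in> path_arcs p" if e: "e \<in> A" for e
  proof (cases "e \<in> F")
    case True
    then obtain a b where "e = (a, b)" "(a, b) \<in> F" by (cases e) auto
    then show ?thesis
      using second by (intro ex1I[of _ "(a, b, g b a)"]) (auto simp: P_def)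
  next
    case False
    then obtain a b where ab: "e = (a, b)" "(a, b) \<in> A - F" using e by (cases e) auto
    then obtain u where u: "(u, a) \<in> F" "g a u = b"
      using bij_betw_imp_surj_on[OF g[of a]] by force
    show ?thesis
    proof (rule ex1I[of _ "(u, a, b)"])
      show "(u, a, b) \<in> P \<and> e \<in> path_arcs (u, a, b)" using ab u by (auto simp: P_def)
    next
      fix p assume p: "p \<in> P \<and> e \<in> path_arcs p"
      then obtain u' v' where p': "p = (u', v', g v' u')" "(u', v') \<in> F" by (auto simp: P_def)
      then have "v' = a" "g a u' = b" using p ab False by auto
      then have "u' = u" using p' u g[of a] by (auto simp: bij_betw_def inj_on_def)
      then show "p = (u, a, b)" using p' \<open>v' = a\<close> \<open>g a u' = b\<close> by simp
    qed
  qed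
  moreover have "\<forall>(u, v, w)\<in>P. (u, v) \<in> A \<and> (v, w) \<in> A \<and> (u, v) \<noteq> (v, w)"
  proof (clarify)
    fix u v w assume "(u, v, w) \<in> P"
    then have "(u, v) \<in> F" "(v, w) \<in> A - F" using second by (auto simp: P_def)
    then show "(u, v) \<in> A \<and> (v, w) \<in> A \<and> (u, v) \<noteq> (v, w)" using F by blast
  qed
  ultimately have "P3_decomposition A P" unfolding P3_decomposition_def by blast
  then show ?thesis by (simp add: P_def)
qed

lemma balanced_imp_P3_decomposition:
  assumes "finite A" "P3_balanced A F"
  shows "has_P3_decomposition A"
proof -
  have F: "F \<subseteq> A" "\<And>v. card (F\<inverse> `` {v}) = card ((A - F) `` {v})"
    using assms(2) by (auto simp: P3_balanced_def)
  have "\<exists>h. bij_betw h (F\<inverse> `` {v}) ((A - F) `` {v})" for v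
  proof (rule finite_same_card_bij)
    show "finite (F\<inverse> `` {v})" "finite ((A - F) `` {v})"
      using finite_subset[OF F(1) assms(1)] assms(1) by simp_all
  qed (rule F(2))
  then obtain g where "\<And>v. bij_betw (g v) (F\<inverse> `` {v}) ((A - F) `` {v})" by metis
  from P3_decomposition_of_pairing[OF F(1) this] show ?thesis
    unfolding has_P3_decomposition_def by blast
qed

lemma has_P3_decomposition_iff_balanced:
  "finite A \<Longrightarrow> has_P3_decomposition A \<longleftrightarrow> (\<exists>F. P3_balanced A F)"
  unfolding has_P3_decomposition_def
  using P3_decomposition_imp_balanced
    balanced_imp_P3_decomposition[unfolded has_P3_decomposition_def]
  by blast

section \<open>Tournaments\<close>

lemma tournamentD:
  assumes "tournament V A"
  shows "finite V" "A \<subseteq> V \<times> V" "irrefl A" "asym A"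
    and "u \<in> V \<Longrightarrow> v \<in> V \<Longrightarrow> u \<noteq> v \<Longrightarrow> (u, v) \<notin> A \<Longrightarrow> (v, u) \<in> A"
proof -
  have "(u, v) \<in> A \<longleftrightarrow> (v, u) \<notin> A" if "u \<in> V" "v \<in> V" "u \<noteq> v" for u v
    using assms that unfolding tournament_def by blast
  moreover have "(v, v) \<notin> A" "A \<subseteq> V \<times> V" for v using assms unfolding tournament_def by blast+
  ultimately show "finite V" "A \<subseteq> V \<times> V" "irrefl A" "asym A"
    and "u \<in> V \<Longrightarrow> v \<in> V \<Longrightarrow> u \<noteq> v \<Longrightarrow> (u, v) \<notin> A \<Longrightarrow> (v, u) \<in> A"
    using assms unfolding tournament_def irrefl_on_def asym_on_def by blast+
qed

lemma finite_tournament: "tournament V A \<Longrightarrow> finite A"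
  using tournamentD(1,2)[of V A] by (simp add: finite_subset)

lemma sum_out_degree_tournament: "tournament V A \<Longrightarrow> sum (out_degree A) V = card A"
  using tournamentD(1,2)[of V A] finite_tournament[of V A]
  by (simp add: sum_out_degree Int_absorb2 subset_iff)

lemma out_degree_split:
  assumes "finite A" "F \<subseteq> A"
  shows "out_degree A v = card (F `` {v}) + card ((A - F) `` {v})"
proof -
  have "A `` {v} = F `` {v} \<union> (A - F) `` {v}" using assms(2) by blast
  moreover have "finite F" using assms finite_subset by blast
  moreover have "F `` {v} \<inter> (A - F) `` {v} = {}" by blast
  ultimately show ?thesis
    using assms(1) by (simp add: out_degree_def card_Un_disjoint)
qed

lemma out_degree_symmetric_closure:
  assumes "finite A" "asym A" "F \<subseteq> A"
  shows "out_degree (F \<union> F\<inverse>) v = card (F `` {v}) + card (F\<inverse> `` {v})"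
proof -
  have "finite F" using assms(1,3) finite_subset by blast
  moreover have "F `` {v} \<inter> F\<inverse> `` {v} = {}" using assms(2,3) by (auto dest: asymD)
  ultimately show ?thesis by (simp add: out_degree_def Un_Image card_Un_disjoint)
qed

lemma tournament_balanced_iff_degree_realization:
  assumes t: "tournament V A"
  shows "(\<exists>F. P3_balanced A F) \<longleftrightarrow> (\<exists>H. simple_graph V H \<and> (\<forall>v\<in>V. out_degree H v = out_degree A v))"
proof
  assume "\<exists>F. P3_balanced A F"
  then obtain F where F: "F \<subseteq> A" "\<And>v. card (F\<inverse> `` {v}) = card ((A - F) `` {v})"
    by (auto simp: P3_balanced_def)
  have "simple_graph V (F \<union> F\<inverse>)"
    using F(1) tournamentD(2,3)[OF t] by (auto simp: simple_graph_def sym_on_def irrefl_on_def)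
  moreover have "out_degree (F \<union> F\<inverse>) v = out_degree A v" for v
    using out_degree_symmetric_closure[OF finite_tournament[OF t] tournamentD(4)[OF t] F(1)]
      out_degree_split[OF finite_tournament[OF t] F(1)] F(2) by simp
  ultimately show "\<exists>H. simple_graph V H \<and> (\<forall>v\<in>V. out_degree H v = out_degree A v)" by blast
next
  assume "\<exists>H. simple_graph V H \<and> (\<forall>v\<in>V. out_degree H v = out_degree A v)"
  then obtain H where H: "simple_graph V H" "\<And>v. v \<in> V \<Longrightarrow> out_degree H v = out_degree A v" by blast
  define F where "F = A \<inter> H"
  have "F \<union> F\<inverse> = H"
    using simple_graphD[OF H(1)] tournamentD(5)[OF t] by (auto simp: F_def)
  then have "card (F\<inverse> `` {v}) = card ((A - F) `` {v})" for v
  proof (cases "v \<in> V")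
    case True
    then show ?thesis
      using out_degree_symmetric_closure[OF finite_tournament[OF t] tournamentD(4)[OF t], of F]
        out_degree_split[OF finite_tournament[OF t], of F] H(2)[of v] \<open>F \<union> F\<inverse> = H\<close>
      by (simp add: F_def)
  next
    case False
    then have "F\<inverse> `` {v} = {}" "(A - F) `` {v} = {}" using tournamentD(2)[OF t]
      by (auto simp: F_def)
    then show ?thesis by simp
  qed
  then show "\<exists>F. P3_balanced A F" by (auto simp: P3_balanced_def F_def)
qed

lemma tournament_arcs_both_ways:
  assumes t: "tournament V A" and "X \<subseteq> V" "Y \<subseteq> V"
  shows "card (A \<inter> X \<times> Y) + card (A \<inter> Y \<times> X) = card (X \<times> Y - Id)"
proof -
  have "prod.swap ` (A \<inter> Y \<times> X) = A\<inverse> \<inter> X \<times> Y" by auto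
  then have "card (A \<inter> Y \<times> X) = card (A\<inverse> \<inter> X \<times> Y)"
    using card_image[of prod.swap "A \<inter> Y \<times> X"] by simp
  moreover have "(A \<inter> X \<times> Y) \<union> (A\<inverse> \<inter> X \<times> Y) = X \<times> Y - Id"
  proof
    show "(A \<inter> X \<times> Y) \<union> (A\<inverse> \<inter> X \<times> Y) \<subseteq> X \<times> Y - Id"
      using tournamentD(3)[OF t] by (auto dest: irreflD)
    show "X \<times> Y - Id \<subseteq> (A \<inter> X \<times> Y) \<union> (A\<inverse> \<inter> X \<times> Y)"
      using assms(2,3) tournamentD(5)[OF t] by blast
  qed
  moreover have "(A \<inter> X \<times> Y) \<inter> (A\<inverse> \<inter> X \<times> Y) = {}"
    using tournamentD(4)[OF t] by (auto dest: asymD)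
  ultimately show ?thesis
    using finite_tournament[OF t] by (metis card_Un_disjoint finite_Int finite_converse)
qed

lemma erdos_gallai_condition_tournament_iff:
  assumes t: "tournament V A"
  shows "erdos_gallai_condition V (out_degree A) \<longleftrightarrow>
    (\<forall>X Y Z. X \<union> Y \<union> Z = V \<and> X \<inter> Y = {} \<and> X \<inter> Z = {} \<and> Y \<inter> Z = {} \<longrightarrow>
       arcs_between A X Y \<le> arcs_between A Y X + arcs_between A X X + arcs_between A Y Y
         + arcs_between A Z X + arcs_between A Y Z)"
proof -
  have "sum (out_degree A) X \<le> card X * (card X - 1) + card X * card Z + sum (out_degree A) Y \<longleftrightarrow>
      arcs_between A X Y \<le> arcs_between A Y X + arcs_between A X X + arcs_between A Y Y
         + arcs_between A Z X + arcs_between A Y Z"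
    if part: "X \<union> Y \<union> Z = V" "X \<inter> Y = {}" "X \<inter> Z = {}" "Y \<inter> Z = {}" for X Y Z
  proof -
    have sub: "X \<subseteq> V" "Y \<subseteq> V" "Z \<subseteq> V" using part(1) by auto
    then have fin: "finite X" "finite Y" using tournamentD(1)[OF t] finite_subset by blast+
    have arcs: "arcs_between A S T = card (A \<inter> S \<times> T)" for S T
      unfolding arcs_between_def by (rule arg_cong[where f = card]) auto
    have "X \<times> Z - Id = X \<times> Z" using part(3) by auto
    then have "card (A \<inter> X \<times> Z) + card (A \<inter> Z \<times> X) = card X * card Z"
      using tournament_arcs_both_ways[OF t sub(1) sub(3)] by (simp add: card_cartesian_product)
    moreover have "card (A \<inter> X \<times> X) + card (A \<inter> X \<times> X) = card X * (card X - 1)"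
      using tournament_arcs_both_ways[OF t sub(1) sub(1)] card_offdiag[OF fin(1)] by simp
    ultimately show ?thesis
      using sum_out_degree_partition[OF finite_tournament[OF t] tournamentD(2)[OF t] fin(1) part]
        sum_out_degree_partition[OF finite_tournament[OF t] tournamentD(2)[OF t] fin(2) part]
      unfolding arcs by linarith
  qed
  then show ?thesis unfolding erdos_gallai_condition_def by blast
qed

theorem theorem3p2:
  fixes V :: "'a set" and A :: "('a \<times> 'a) set"
  assumes "tournament V A"
    and "even (card A)"
  shows "has_P3_decomposition A \<longleftrightarrow>
    (\<forall>X Y Z. X \<union> Y \<union> Z = V \<and> X \<inter> Y = {} \<and> X \<inter> Z = {} \<and> Y \<inter> Z = {} \<longrightarrow>
       arcs_between A X Y \<le> arcs_between A Y X + arcs_between A X X + arcs_between A Y Y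
         + arcs_between A Z X + arcs_between A Y Z)"
proof -
  have "has_P3_decomposition A \<longleftrightarrow> (\<exists>F. P3_balanced A F)"
    using has_P3_decomposition_iff_balanced finite_tournament[OF assms(1)] .
  also have "\<dots> \<longleftrightarrow> (\<exists>H. simple_graph V H \<and> (\<forall>v\<in>V. out_degree H v = out_degree A v))"
    using tournament_balanced_iff_degree_realization[OF assms(1)] .
  also have "\<dots> \<longleftrightarrow> erdos_gallai_condition V (out_degree A)"
    using degree_realization_iff_erdos_gallai[OF tournamentD(1)[OF assms(1)]] assms(2)
    by (simp add: sum_out_degree_tournament[OF assms(1)])
  finally show ?thesis unfolding erdos_gallai_condition_tournament_iff[OF assms(1)] .
qed

end
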